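(* For all integers $n\geq0$ and $m\geq1$, we have $a_{2m}^{\star}(n)\equiv 0 \pmod{2m}$.
   Context: A partition is self-conjugate if its Young diagram is symmetric about the main diagonal. The hook length of the cell $(i,j)$ of a Young diagram is the number of cells to its right in row $i$ plus the number below it in column $j$ plus $1$; $n_t(\lambda)$ is the number of cells of $\lambda$ with hook length $t$. Define $a_t^{\star}(n)=\sum n_t(\lambda)$, the sum over all self-conjugate partitions $\lambda$ of $n$ (so $a_t^\star(0)=0$). *)

theory Defs
  imports Main
begin

text \<open>The Young diagram consists of cells (i,j) with i < length lam and
j < lam ! i (0-based row and column indices).\<close>

definition is_partition :: "nat list \<Rightarrow> bool" where
  "is_partition lam \<longleftrightarrow> sorted_wrt (\<ge>) lam \<and> (\<forall>x\<in>set lam. 0 < x)"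

definition partitions :: "nat \<Rightarrow> nat list set" where
  "partitions n = {lam. is_partition lam \<and> sum_list lam = n}"

definition cells :: "nat list \<Rightarrow> (nat \<times> nat) set" where
  "cells lam = {(i, j). i < length lam \<and> j < lam ! i}"

definition col_len :: "nat list \<Rightarrow> nat \<Rightarrow> nat" where
  "col_len lam j = card {i. i < length lam \<and> j < lam ! i}"

definition conjugate :: "nat list \<Rightarrow> nat list" where
  "conjugate lam = map (col_len lam) [0..<(if lam = [] then 0 else hd lam)]"

definition self_conjugate :: "nat list \<Rightarrow> bool" where
  "self_conjugate lam \<longleftrightarrow> conjugate lam = lam"

text \<open>Hook length of cell (i,j): arm (cells to the right) + leg (cells below) + 1.\<close>
definition hook :: "nat list \<Rightarrow> nat \<times> nat \<Rightarrow> nat" where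
  "hook lam c = (case c of (i, j) \<Rightarrow>
      (lam ! i - (j + 1)) + (col_len lam j - (i + 1)) + 1)"

definition n_hook :: "nat \<Rightarrow> nat list \<Rightarrow> nat" where
  "n_hook t lam = card {c \<in> cells lam. hook lam c = t}"

definition a_star :: "nat \<Rightarrow> nat \<Rightarrow> nat" where
  "a_star t n = (\<Sum>lam \<in> {lam \<in> partitions n. self_conjugate lam}. n_hook t lam)"

end

theory Submission
  imports Defs
begin

text \<open>A self-conjugate partition is determined by the arm lengths \<open>A\<close> of its diagonal hooks,
  and its size is \<open>\<Sum>a\<in>A. 2a + 1\<close>. Writing \<open>x\<^sub>i = \<lambda>\<^sub>i - i - 1\<close>, the hook of the cell \<open>(i, j)\<close>
  is \<open>x\<^sub>i + x\<^sub>j + 1\<close>, and the \<open>x\<^sub>i\<close> form the Maya diagram \<open>D\<close> of \<open>\<lambda>\<close>, which is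
  symmetric under \<open>u \<mapsto> -1 - u\<close>. Hence the number of hooks of length \<open>2m\<close> is the number
  of \<open>u \<in> D\<close> with \<open>2m - 1 - u \<in> D\<close>, i.e. with \<open>u - 2m \<notin> D\<close>: these are the corners of
  the runners of the \<open>2m\<close>-abacus of \<open>D\<close>, and runners \<open>r\<close> and \<open>2m - 1 - r\<close> have
  equally many. Exchanging the contents of runners \<open>0\<close> and \<open>r < m\<close>, shifted so that every
  runner keeps its charge, is a size-preserving involution on self-conjugate partitions.
  So, summed over all self-conjugate partitions of \<open>n\<close>, each of the \<open>2m\<close> runners
  contributes the same number of corners.\<close>

section \<open>Maya sets\<close>

definition is_maya :: "int set \<Rightarrow> bool" where
  "is_maya T \<longleftrightarrow> (\<exists>l u. \<forall>k. (k < l \<longrightarrow> k \<in> T) \<and> (u \<le> k \<longrightarrow> k \<notin> T))"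

definition maya_pos :: "int set \<Rightarrow> int set" where
  "maya_pos T = {k \<in> T. 0 \<le> k}"

definition maya_gaps :: "int set \<Rightarrow> int set" where
  "maya_gaps T = {k. k < 0 \<and> k \<notin> T}"

definition charge :: "int set \<Rightarrow> int" where
  "charge T = int (card (maya_pos T)) - int (card (maya_gaps T))"

definition maya_moment :: "int set \<Rightarrow> int" where
  "maya_moment T = (\<Sum>k\<in>maya_pos T. k) + (\<Sum>k\<in>maya_gaps T. - k)"

text \<open>The size of the partition encoded by a Maya set: the moment of the vacuum set
  \<open>{k. k < charge T}\<close> is \<open>charge T * (charge T - 1) div 2\<close>.\<close>
definition maya_size :: "int set \<Rightarrow> int" where
  "maya_size T = maya_moment T - charge T * (charge T - 1) div 2"

definition shift :: "int \<Rightarrow> int set \<Rightarrow> int set" where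
  "shift d T = {k. k - d \<in> T}"

lemma finite_maya_pos:
  assumes "is_maya T"
  shows "finite (maya_pos T)"
proof -
  obtain u where "\<And>k. u \<le> k \<Longrightarrow> k \<notin> T"
    using assms unfolding is_maya_def by blast
  then have "maya_pos T \<subseteq> {0..u}"
    unfolding maya_pos_def by (auto intro: ccontr)
  then show ?thesis
    by (rule finite_subset) simp
qed

lemma finite_maya_gaps:
  assumes "is_maya T"
  shows "finite (maya_gaps T)"
proof -
  obtain l where "\<And>k. k < l \<Longrightarrow> k \<in> T"
    using assms unfolding is_maya_def by blast
  then have "maya_gaps T \<subseteq> {l..0}"
    unfolding maya_gaps_def by (auto intro: ccontr)
  then show ?thesis
    by (rule finite_subset) simp
qed

lemma maya_moment_eq_size: "maya_moment T = maya_size T + charge T * (charge T - 1) div 2"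
  unfolding maya_size_def by simp

lemma shift_shift: "shift a (shift b T) = shift (a + b) T"
  unfolding shift_def by (simp add: algebra_simps)

lemma shift_0 [simp]: "shift 0 T = T"
  unfolding shift_def by simp

lemma is_maya_shift:
  assumes "is_maya T"
  shows "is_maya (shift d T)"
proof -
  obtain l u where "\<And>k. (k < l \<longrightarrow> k \<in> T) \<and> (u \<le> k \<longrightarrow> k \<notin> T)"
    using assms unfolding is_maya_def by blast
  then show ?thesis
    unfolding is_maya_def shift_def by (intro exI[of _ "l + d"] exI[of _ "u + d"]) auto
qed

lemma maya_pos_shift1: "maya_pos (shift 1 T) = (\<lambda>k. k + 1) ` {k \<in> T. -1 \<le> k}"
  unfolding maya_pos_def shift_def
  by (auto simp: image_iff intro!: exI[where x = "x - 1" for x])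

lemma maya_gaps_shift1: "maya_gaps (shift 1 T) = (\<lambda>k. k + 1) ` {k. k < -1 \<and> k \<notin> T}"
  unfolding maya_gaps_def shift_def
  by (auto simp: image_iff intro!: exI[where x = "x - 1" for x])

lemma charge_moment_shift1:
  assumes "is_maya T"
  shows "charge (shift 1 T) = charge T + 1"
    and "maya_moment (shift 1 T) = maya_moment T + charge T"
proof -
  let ?P = "maya_pos T" and ?N = "maya_gaps T"
  let ?P' = "{k \<in> T. -1 \<le> k}" and ?N' = "{k. k < -1 \<and> k \<notin> T}"
  have fP: "finite ?P" and fN: "finite ?N"
    using assms by (simp_all add: finite_maya_pos finite_maya_gaps)
  have inj: "inj_on (\<lambda>k::int. k + 1) X" for X by (simp add: inj_on_def)
  \<comment> \<open>Only the position \<open>-1\<close> moves between the nonnegative part and the negative part.\<close>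
  have P': "?P' = ?P \<union> ({-1} \<inter> T)" and N: "?N = ?N' \<union> ({-1} - T)"
    unfolding maya_pos_def maya_gaps_def by auto
  have fN': "finite ?N'"
    using fN N by auto
  have cP: "card ?P' = card ?P + card ({-1} \<inter> T)"
    unfolding P' by (rule card_Un_disjoint) (use fP in \<open>auto simp: maya_pos_def\<close>)
  have cN: "card ?N = card ?N' + card ({-1} - T)"
    unfolding N by (rule card_Un_disjoint) (use fN' in auto)
  have one: "card ({-1::int} \<inter> T) + card ({-1} - T) = 1"
    by (cases "-1 \<in> T") (auto simp: Diff_eq)
  have sP: "(\<Sum>k\<in>?P'. k + 1) = (\<Sum>k\<in>?P. k) + int (card ?P)"
  proof -
    have "(\<Sum>k\<in>?P'. k + 1) = (\<Sum>k\<in>?P. k + 1) + (\<Sum>k\<in>{-1} \<inter> T. k + 1)"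
      unfolding P' by (rule sum.union_disjoint) (use fP in \<open>auto simp: maya_pos_def\<close>)
    also have "(\<Sum>k\<in>{-1} \<inter> T. k + 1) = 0"
      by (rule sum.neutral) auto
    finally show ?thesis by (simp add: sum.distrib)
  qed
  have sN: "(\<Sum>k\<in>?N'. - (k + 1)) = (\<Sum>k\<in>?N. - k) - int (card ?N)"
  proof -
    have "(\<Sum>k\<in>?N. - k - 1) = (\<Sum>k\<in>?N'. - k - 1) + (\<Sum>k\<in>{-1} - T. - k - 1)"
      unfolding N by (rule sum.union_disjoint) (use fN' in auto)
    also have "(\<Sum>k\<in>{-1} - T. - k - 1) = 0"
      by (rule sum.neutral) auto
    finally show ?thesis by (simp add: sum_subtractf)
  qed
  show "charge (shift 1 T) = charge T + 1"
    unfolding charge_def maya_pos_shift1 maya_gaps_shift1 card_image[OF inj]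
    using cP cN one by linarith
  show "maya_moment (shift 1 T) = maya_moment T + charge T"
    unfolding maya_moment_def charge_def maya_pos_shift1 maya_gaps_shift1
      sum.reindex[OF inj] comp_def sP sN by simp
qed

lemma maya_size_shift1: "is_maya T \<Longrightarrow> maya_size (shift 1 T) = maya_size T"
  unfolding maya_size_def charge_moment_shift1 by (simp add: algebra_simps)

lemma charge_size_shift:
  assumes "is_maya T"
  shows "charge (shift d T) = charge T + d \<and> maya_size (shift d T) = maya_size T"
proof (induction d rule: int_induct[where k = 0])
  case (step1 i)
  have "shift (i + 1) T = shift 1 (shift i T)"
    by (simp add: shift_shift add.commute)
  then show ?case
    using charge_moment_shift1 maya_size_shift1 is_maya_shift[OF assms] step1 by simp
next
  case (step2 i)
  have "shift i T = shift 1 (shift (i - 1) T)"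
    by (simp add: shift_shift)
  then show ?case
    using charge_moment_shift1 maya_size_shift1 is_maya_shift[OF assms] step2 by simp
qed simp

definition corner_set :: "int set \<Rightarrow> int set" where
  "corner_set T = {k \<in> T. k - 1 \<notin> T}"

definition corners :: "int set \<Rightarrow> nat" where
  "corners T = card (corner_set T)"

lemma finite_corner_set:
  assumes "is_maya T"
  shows "finite (corner_set T)"
proof -
  obtain l u where lu: "\<And>k. (k < l \<longrightarrow> k \<in> T) \<and> (u \<le> k \<longrightarrow> k \<notin> T)"
    using assms unfolding is_maya_def by blast
  have "l \<le> k \<and> k \<le> u" if "k \<in> T" "k - 1 \<notin> T" for k
    using lu[of k] lu[of "k - 1"] that by auto
  then have "corner_set T \<subseteq> {l..u}"
    unfolding corner_set_def by auto
  then show ?thesis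
    by (rule finite_subset) simp
qed

lemma corners_shift: "corners (shift d T) = corners T"
proof -
  have "corner_set (shift d T) = (\<lambda>k. k + d) ` corner_set T"
    unfolding shift_def corner_set_def
    by (auto simp: image_iff algebra_simps intro!: exI[where x = "x - d" for x])
  then show ?thesis
    unfolding corners_def by (simp add: card_image inj_on_def)
qed

lemma corners_reflect_complement: "corners {k. -1 - k \<notin> T} = corners T"
proof -
  have "k \<in> corner_set {k. -1 - k \<notin> T} \<longleftrightarrow> - k \<in> corner_set T" for k
    unfolding corner_set_def by (auto simp: algebra_simps) (smt (verit))+
  then have "corner_set {k. -1 - k \<notin> T} = uminus ` corner_set T"
    by (intro set_eqI) (metis image_iff minus_minus)
  then show ?thesis
    unfolding corners_def by (simp add: card_image)
qed

section \<open>The symmetric Maya diagram of a set of arms and its \<open>2m\<close>-abacus\<close>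

text \<open>A self-conjugate partition with diagonal arm lengths \<open>A\<close> has the Maya diagram
  \<open>{\<lambda>\<^sub>i - i - 1}\<close>; it is symmetric under \<open>u \<mapsto> -1 - u\<close> and is determined by \<open>A\<close>.\<close>
definition maya_diagram :: "nat set \<Rightarrow> int set" where
  "maya_diagram A = {u. if 0 \<le> u then nat u \<in> A else nat (-1 - u) \<notin> A}"

lemma int_in_maya_diagram [simp]: "int a \<in> maya_diagram A \<longleftrightarrow> a \<in> A"
  unfolding maya_diagram_def by simp

lemma maya_diagram_reflect: "-1 - u \<in> maya_diagram A \<longleftrightarrow> u \<notin> maya_diagram A"
  unfolding maya_diagram_def by auto

definition runner :: "nat \<Rightarrow> nat set \<Rightarrow> nat \<Rightarrow> int set" where
  "runner m A r = {k. int r + 2 * int m * k \<in> maya_diagram A}"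

text \<open>Only the runners \<open>r < m\<close> are read: by the symmetry of the diagram, runner
  \<open>2m - 1 - r\<close> is the reflected complement of runner \<open>r\<close>.\<close>
definition from_runners :: "nat \<Rightarrow> (nat \<Rightarrow> int set) \<Rightarrow> nat set" where
  "from_runners m F =
    {a. if a mod (2 * m) < m then int (a div (2 * m)) \<in> F (a mod (2 * m))
        else - int (a div (2 * m)) - 1 \<notin> F (2 * m - 1 - a mod (2 * m))}"

lemma int_eq_mod_plus_div: "int a = int (a mod (2 * m)) + 2 * int m * int (a div (2 * m))"
proof -
  have "a = a mod (2 * m) + 2 * m * (a div (2 * m))"
    by simp
  then have "int a = int (a mod (2 * m) + 2 * m * (a div (2 * m)))"
    by simp
  then show ?thesis
    by (simp only: of_nat_add of_nat_mult of_nat_numeral)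
qed

lemma from_runners_runner:
  assumes "m > 0"
  shows "from_runners m (runner m A) = A"
proof (rule set_eqI)
  fix a
  let ?q = "a mod (2 * m)" and ?k = "a div (2 * m)"
  have d: "int a = int ?q + 2 * int m * int ?k"
    by (rule int_eq_mod_plus_div)
  show "a \<in> from_runners m (runner m A) \<longleftrightarrow> a \<in> A"
  proof (cases "?q < m")
    case True
    then show ?thesis
      unfolding from_runners_def runner_def by (simp add: d[symmetric])
  next
    case False
    have "?q < 2 * m"
      using assms by simp
    then have e: "int (2 * m - 1 - ?q) + 2 * int m * (- int ?k - 1) = -1 - int a"
      using False d by (simp add: of_nat_diff algebra_simps)
    have "a \<in> from_runners m (runner m A) \<longleftrightarrow>
        int (2 * m - 1 - ?q) + 2 * int m * (- int ?k - 1) \<notin> maya_diagram A"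
      using False unfolding from_runners_def runner_def by simp
    also have "\<dots> \<longleftrightarrow> a \<in> A"
      unfolding e by (simp add: maya_diagram_reflect)
    finally show ?thesis .
  qed
qed

lemma runner_from_runners:
  assumes "r < m"
  shows "runner m (from_runners m F) r = F r"
proof (rule set_eqI)
  fix k :: int
  show "k \<in> runner m (from_runners m F) r \<longleftrightarrow> k \<in> F r"
  proof (cases "k \<ge> 0")
    case True
    have e: "int r + 2 * int m * k = int (r + 2 * m * nat k)"
      using True by simp
    have "k \<in> runner m (from_runners m F) r \<longleftrightarrow>
        int (r + 2 * m * nat k) \<in> maya_diagram (from_runners m F)"
      by (simp only: runner_def mem_Collect_eq e)
    also have "\<dots> \<longleftrightarrow> k \<in> F r"
      using assms True unfolding int_in_maya_diagram from_runners_def by simp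
    finally show ?thesis .
  next
    case False
    let ?a = "(2 * m - 1 - r) + 2 * m * nat (- k - 1)"
    have e: "-1 - (int r + 2 * int m * k) = int ?a"
      using False assms by (simp add: of_nat_diff algebra_simps)
    have "2 * m - 1 - r < 2 * m"
      using assms by simp
    then have a_mod_div: "?a mod (2 * m) = 2 * m - 1 - r" "?a div (2 * m) = nat (- k - 1)"
      by simp_all
    have arith: "\<not> 2 * m - 1 - r < m" "2 * m - 1 - (2 * m - 1 - r) = r"
      "- int (nat (- k - 1)) - 1 = k"
      using assms False by simp_all
    have "k \<in> runner m (from_runners m F) r \<longleftrightarrow>
        -1 - (int r + 2 * int m * k) \<notin> maya_diagram (from_runners m F)"
      unfolding runner_def by (simp add: maya_diagram_reflect)
    also have "\<dots> \<longleftrightarrow> k \<in> F r"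
      by (simp only: e int_in_maya_diagram from_runners_def mem_Collect_eq a_mod_div arith
          if_False not_not)
    finally show ?thesis .
  qed
qed

lemma from_runners_cong:
  assumes "m > 0" "\<And>r. r < m \<Longrightarrow> F r = G r"
  shows "from_runners m F = from_runners m G"
proof -
  have "a \<in> from_runners m F \<longleftrightarrow> a \<in> from_runners m G" for a
  proof -
    have "a mod (2 * m) < 2 * m"
      using assms by simp
    then show ?thesis
      unfolding from_runners_def
      using assms(2)[of "a mod (2 * m)"] assms(2)[of "2 * m - 1 - a mod (2 * m)"] by auto
  qed
  then show ?thesis
    by blast
qed

lemma is_maya_runner:
  assumes "finite A" "m > 0"
  shows "is_maya (runner m A r)"
proof -
  obtain N where N: "\<And>a. a \<in> A \<Longrightarrow> a < N"
    using assms(1) finite_nat_set_iff_bounded by auto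
  have m1: "int m \<ge> 1"
    using assms(2) by simp
  show ?thesis
    unfolding is_maya_def
  proof (intro exI allI conjI impI)
    fix k :: int
    assume k: "int N \<le> k"
    have "1 * k \<le> int m * k"
      using m1 k by (intro mult_right_mono) auto
    then have u: "int r + 2 * int m * k \<ge> int N"
      using k by simp
    then have "nat (int r + 2 * int m * k) \<notin> A"
      using N by force
    then show "k \<notin> runner m A r"
      unfolding runner_def maya_diagram_def using u by simp
  next
    fix k :: int
    assume k: "k < - (int N + int r + 1)"
    have "2 * int m * k \<le> 2 * k"
      using m1 k by (intro mult_right_mono_neg) auto
    then have a: "int r + 2 * int m * k < 0" "-1 - (int r + 2 * int m * k) \<ge> int N"
      using k by linarith+
    then have "nat (-1 - (int r + 2 * int m * k)) \<notin> A"
      using N by force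
    then show "k \<in> runner m A r"
      unfolding runner_def maya_diagram_def using a by simp
  qed
qed

lemma finite_from_runners:
  assumes "m > 0" "\<And>r. r < m \<Longrightarrow> is_maya (F r)"
  shows "finite (from_runners m F)"
proof -
  let ?X = "(\<Union>r<m. (\<lambda>k. r + 2 * m * nat k) ` maya_pos (F r)) \<union>
            (\<Union>r<m. (\<lambda>k. (2 * m - 1 - r) + 2 * m * nat (- k - 1)) ` maya_gaps (F r))"
  have "from_runners m F \<subseteq> ?X"
  proof
    fix a
    assume a: "a \<in> from_runners m F"
    let ?q = "a mod (2 * m)" and ?d = "a div (2 * m)"
    have ql: "?q < 2 * m"
      using assms by simp
    show "a \<in> ?X"
    proof (cases "?q < m")
      case True
      then have "int ?d \<in> maya_pos (F ?q)"
        using a unfolding from_runners_def maya_pos_def by simp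
      moreover have "a = ?q + 2 * m * nat (int ?d)"
        by simp
      ultimately show ?thesis
        using True by blast
    next
      case False
      let ?r = "2 * m - 1 - ?q"
      have "- int ?d - 1 \<in> maya_gaps (F ?r)"
        using a False unfolding from_runners_def maya_gaps_def by simp
      moreover have "a = (2 * m - 1 - ?r) + 2 * m * nat (- (- int ?d - 1) - 1)"
        using False ql by simp
      moreover have "?r < m"
        using False ql by simp
      ultimately show ?thesis
        by blast
    qed
  qed
  moreover have "finite ?X"
    using assms(2) by (simp add: finite_maya_pos finite_maya_gaps)
  ultimately show ?thesis
    using finite_subset by blast
qed

text \<open>The size of the self-conjugate partition whose diagonal hooks have arms \<open>A\<close>.\<close>
definition diag_weight :: "nat set \<Rightarrow> nat" where
  "diag_weight A = (\<Sum>a\<in>A. 2 * a + 1)"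

definition runner_weight :: "nat \<Rightarrow> nat \<Rightarrow> int set \<Rightarrow> int" where
  "runner_weight m r T = 4 * int m * maya_moment T + (2 * int r + 1) * charge T"

lemma sum_lessThan_double_reflect:
  fixes G :: "nat \<Rightarrow> 'a::comm_monoid_add"
  shows "(\<Sum>q<2 * m. G q) = (\<Sum>r<m. G r + G (2 * m - 1 - r))"
proof -
  let ?refl = "\<lambda>r. 2 * m - 1 - r"
  have U: "{..<2 * m} = {..<m} \<union> ?refl ` {..<m}"
  proof (rule set_eqI)
    fix q
    show "q \<in> {..<2 * m} \<longleftrightarrow> q \<in> {..<m} \<union> ?refl ` {..<m}"
    proof (cases "q < m")
      case False
      show ?thesis
      proof
        assume "q \<in> {..<2 * m}"
        then have "q = ?refl (?refl q)" "?refl q < m"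
          using False by auto
        then show "q \<in> {..<m} \<union> ?refl ` {..<m}"
          by blast
      qed auto
    qed auto
  qed
  have I: "inj_on ?refl {..<m}"
    by (auto simp: inj_on_def)
  have "(\<Sum>q<2 * m. G q) = (\<Sum>r<m. G r) + (\<Sum>q\<in>?refl ` {..<m}. G q)"
    unfolding U by (rule sum.union_disjoint) auto
  also have "(\<Sum>q\<in>?refl ` {..<m}. G q) = (\<Sum>r<m. G (?refl r))"
    by (subst sum.reindex[OF I]) (simp add: comp_def)
  finally show ?thesis
    by (simp add: sum.distrib)
qed

lemma inj_on_div_same_mod:
  fixes A :: "nat set"
  assumes "inj f"
  shows "inj_on (\<lambda>a. f (a div n)) {a \<in> A. a mod n = r}"
proof (rule inj_onI)
  fix a b :: nat
  assume "a \<in> {a \<in> A. a mod n = r}" "b \<in> {a \<in> A. a mod n = r}" "f (a div n) = f (b div n)"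
  then have "a mod n = b mod n" "a div n = b div n"
    using assms by (auto dest: injD)
  then show "a = b"
    by (metis div_mult_mod_eq)
qed

lemma maya_pos_runner:
  assumes "r < m"
  shows "maya_pos (runner m A r) = (\<lambda>a. int (a div (2 * m))) ` {a \<in> A. a mod (2 * m) = r}"
proof (rule set_eqI)
  fix k
  show "k \<in> maya_pos (runner m A r) \<longleftrightarrow> k \<in> (\<lambda>a. int (a div (2 * m))) ` {a \<in> A. a mod (2 * m) = r}"
  proof
    assume "k \<in> maya_pos (runner m A r)"
    then have k: "k \<ge> 0" "int r + 2 * int m * k \<in> maya_diagram A"
      unfolding maya_pos_def runner_def by auto
    let ?a = "r + 2 * m * nat k"
    have e: "int r + 2 * int m * k = int ?a"
      using k by simp
    have "int ?a \<in> maya_diagram A"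
      using k(2) by (simp only: e)
    then have "?a \<in> A"
      by (simp only: int_in_maya_diagram)
    moreover have "?a mod (2 * m) = r" "?a div (2 * m) = nat k"
      using assms by auto
    ultimately show "k \<in> (\<lambda>a. int (a div (2 * m))) ` {a \<in> A. a mod (2 * m) = r}"
      using k by (auto intro!: image_eqI[of _ _ ?a])
  next
    assume "k \<in> (\<lambda>a. int (a div (2 * m))) ` {a \<in> A. a mod (2 * m) = r}"
    then obtain a where a: "a \<in> A" "a mod (2 * m) = r" and k: "k = int (a div (2 * m))"
      by auto
    have "int a = int r + 2 * int m * k"
      using int_eq_mod_plus_div[of a m] a k by simp
    then show "k \<in> maya_pos (runner m A r)"
      using a k unfolding maya_pos_def runner_def by (simp flip: int_in_maya_diagram)
  qed
qed

lemma maya_gaps_runner: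
  assumes "r < m"
  shows "maya_gaps (runner m A r) =
    (\<lambda>a. - int (a div (2 * m)) - 1) ` {a \<in> A. a mod (2 * m) = 2 * m - 1 - r}"
proof (rule set_eqI)
  fix k
  show "k \<in> maya_gaps (runner m A r) \<longleftrightarrow>
      k \<in> (\<lambda>a. - int (a div (2 * m)) - 1) ` {a \<in> A. a mod (2 * m) = 2 * m - 1 - r}"
  proof
    assume "k \<in> maya_gaps (runner m A r)"
    then have k: "k < 0" "int r + 2 * int m * k \<notin> maya_diagram A"
      unfolding maya_gaps_def runner_def by auto
    let ?a = "(2 * m - 1 - r) + 2 * m * nat (- k - 1)"
    have e: "-1 - (int r + 2 * int m * k) = int ?a"
      using k assms by (simp add: of_nat_diff algebra_simps)
    have "?a \<in> A"
      using k(2) e maya_diagram_reflect by (metis int_in_maya_diagram)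
    moreover have "2 * m - 1 - r < 2 * m"
      using assms by simp
    then have "?a mod (2 * m) = 2 * m - 1 - r" "?a div (2 * m) = nat (- k - 1)"
      by simp_all
    ultimately show "k \<in> (\<lambda>a. - int (a div (2 * m)) - 1) ` {a \<in> A. a mod (2 * m) = 2 * m - 1 - r}"
      using k by (auto intro!: image_eqI[of _ _ ?a])
  next
    assume "k \<in> (\<lambda>a. - int (a div (2 * m)) - 1) ` {a \<in> A. a mod (2 * m) = 2 * m - 1 - r}"
    then obtain a where a: "a \<in> A" "a mod (2 * m) = 2 * m - 1 - r"
      and k: "k = - int (a div (2 * m)) - 1"
      by auto
    have "int a = int (2 * m - 1 - r) + 2 * int m * int (a div (2 * m))"
      using int_eq_mod_plus_div[of a m] a by simp
    then have "-1 - int a = int r + 2 * int m * k"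
      unfolding k using assms by (simp add: of_nat_diff algebra_simps)
    then have "int r + 2 * int m * k \<notin> maya_diagram A"
      using a by (metis int_in_maya_diagram maya_diagram_reflect)
    then show "k \<in> maya_gaps (runner m A r)"
      unfolding k maya_gaps_def runner_def by simp
  qed
qed

lemma sum_same_mod_as_runner_pos:
  assumes "r < m"
  shows "(\<Sum>a\<in>{a \<in> A. a mod (2 * m) = r}. 2 * int a + 1) =
    (\<Sum>k\<in>maya_pos (runner m A r). 4 * int m * k + (2 * int r + 1))"
proof -
  let ?S = "{a \<in> A. a mod (2 * m) = r}"
  have "(\<Sum>k\<in>maya_pos (runner m A r). 4 * int m * k + (2 * int r + 1)) =
      (\<Sum>a\<in>?S. 4 * int m * int (a div (2 * m)) + (2 * int r + 1))"
    unfolding maya_pos_runner[OF assms]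
    by (subst sum.reindex[OF inj_on_div_same_mod[OF inj_of_nat]]) (simp add: comp_def)
  also have "\<dots> = (\<Sum>a\<in>?S. 2 * int a + 1)"
  proof (rule sum.cong[OF refl])
    fix a
    assume "a \<in> ?S"
    then show "4 * int m * int (a div (2 * m)) + (2 * int r + 1) = 2 * int a + 1"
      using int_eq_mod_plus_div[of a m] by simp
  qed
  finally show ?thesis ..
qed

lemma sum_same_mod_as_runner_gaps:
  assumes "r < m"
  shows "(\<Sum>a\<in>{a \<in> A. a mod (2 * m) = 2 * m - 1 - r}. 2 * int a + 1) =
    (\<Sum>k\<in>maya_gaps (runner m A r). - 4 * int m * k - (2 * int r + 1))"
proof -
  let ?S = "{a \<in> A. a mod (2 * m) = 2 * m - 1 - r}"
  have "inj (\<lambda>d. - int d - 1)"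
    by (simp add: inj_def)
  then have "(\<Sum>k\<in>maya_gaps (runner m A r). - 4 * int m * k - (2 * int r + 1)) =
      (\<Sum>a\<in>?S. - 4 * int m * (- int (a div (2 * m)) - 1) - (2 * int r + 1))"
    unfolding maya_gaps_runner[OF assms]
    by (subst sum.reindex[OF inj_on_div_same_mod]) (simp_all add: comp_def)
  also have "\<dots> = (\<Sum>a\<in>?S. 2 * int a + 1)"
  proof (rule sum.cong[OF refl])
    fix a
    assume "a \<in> ?S"
    then have "int a = int (2 * m - 1 - r) + 2 * int m * int (a div (2 * m))"
      using int_eq_mod_plus_div[of a m] by simp
    then show "- 4 * int m * (- int (a div (2 * m)) - 1) - (2 * int r + 1) = 2 * int a + 1"
      using assms by (simp add: of_nat_diff algebra_simps)
  qed
  finally show ?thesis ..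
qed

lemma runner_weight_sums:
  assumes "is_maya T"
  shows "runner_weight m r T =
    (\<Sum>k\<in>maya_pos T. 4 * int m * k + (2 * int r + 1)) +
    (\<Sum>k\<in>maya_gaps T. - 4 * int m * k - (2 * int r + 1))"
proof -
  have "(\<Sum>k\<in>maya_gaps T. - 4 * int m * k - (2 * int r + 1)) =
      4 * int m * (\<Sum>k\<in>maya_gaps T. - k) - (2 * int r + 1) * int (card (maya_gaps T))"
    by (simp add: sum_subtractf sum_distrib_left flip: sum_negf)
  moreover have "(\<Sum>k\<in>maya_pos T. 4 * int m * k + (2 * int r + 1)) =
      4 * int m * (\<Sum>k\<in>maya_pos T. k) + (2 * int r + 1) * int (card (maya_pos T))"
    by (simp add: sum.distrib sum_distrib_left)
  ultimately show ?thesis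
    unfolding runner_weight_def maya_moment_def charge_def by (simp add: algebra_simps)
qed

lemma diag_weight_runners:
  assumes "finite A" "m > 0"
  shows "int (diag_weight A) = (\<Sum>r<m. runner_weight m r (runner m A r))"
proof -
  let ?S = "\<lambda>q. \<Sum>a\<in>{a \<in> A. a mod (2 * m) = q}. 2 * int a + 1"
  have "int (diag_weight A) = (\<Sum>a\<in>A. 2 * int a + 1)"
    unfolding diag_weight_def by (simp add: add.commute)
  also have "\<dots> = (\<Sum>q<2 * m. ?S q)"
    by (rule sum.group[symmetric]) (use assms in auto)
  also have "\<dots> = (\<Sum>r<m. ?S r + ?S (2 * m - 1 - r))"
    by (rule sum_lessThan_double_reflect)
  also have "\<dots> = (\<Sum>r<m. runner_weight m r (runner m A r))"
  proof (rule sum.cong[OF refl])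
    fix r
    assume "r \<in> {..<m}"
    then have r: "r < m"
      by simp
    show "?S r + ?S (2 * m - 1 - r) = runner_weight m r (runner m A r)"
      unfolding runner_weight_sums[OF is_maya_runner[OF assms]]
        sum_same_mod_as_runner_pos[OF r] sum_same_mod_as_runner_gaps[OF r] ..
  qed
  finally show ?thesis .
qed

section \<open>Exchanging two runners\<close>

lemma sum_eq_if_agree_off_pair:
  assumes "finite S" "r0 \<in> S" "r1 \<in> S" "r0 \<noteq> r1"
    and "\<And>r. r \<in> S \<Longrightarrow> r \<noteq> r0 \<Longrightarrow> r \<noteq> r1 \<Longrightarrow> f r = g r"
    and "f r0 + f r1 = g r0 + (g r1 :: 'a::comm_monoid_add)"
  shows "sum f S = sum g S"
proof -
  have "sum f S = f r0 + f r1 + sum f (S - {r0} - {r1})"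
    using assms(1-4) by (simp add: sum.remove[of S r0] sum.remove[of "S - {r0}" r1] add.assoc)
  moreover have "sum g S = g r0 + g r1 + sum g (S - {r0} - {r1})"
    using assms(1-4) by (simp add: sum.remove[of S r0] sum.remove[of "S - {r0}" r1] add.assoc)
  moreover have "sum f (S - {r0} - {r1}) = sum g (S - {r0} - {r1})"
    using assms by (intro sum.cong) auto
  ultimately show ?thesis
    using assms(6) by metis
qed

text \<open>Runners \<open>r0\<close> and \<open>r1\<close> trade their contents, each shifted so that every runner keeps
  its charge. Only charges and sizes of runners enter the weight, so this preserves it.\<close>
definition swap_runners :: "(nat \<Rightarrow> int set) \<Rightarrow> nat \<Rightarrow> nat \<Rightarrow> nat \<Rightarrow> int set" where
  "swap_runners F r0 r1 = F(r0 := shift (charge (F r0) - charge (F r1)) (F r1),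
                            r1 := shift (charge (F r1) - charge (F r0)) (F r0))"

definition runner_swap :: "nat \<Rightarrow> nat \<Rightarrow> nat \<Rightarrow> nat set \<Rightarrow> nat set" where
  "runner_swap m r0 r1 A = from_runners m (swap_runners (runner m A) r0 r1)"

locale runner_pair =
  fixes m r0 r1 :: nat
  assumes r0: "r0 < m" and r1: "r1 < m" and distinct: "r0 \<noteq> r1"
begin

lemma m_pos: "m > 0"
  using r0 by simp

lemma is_maya_swap_runners:
  assumes "\<And>r. r < m \<Longrightarrow> is_maya (F r)" "r < m"
  shows "is_maya (swap_runners F r0 r1 r)"
  unfolding swap_runners_def using assms r0 r1 by (auto intro: is_maya_shift)

lemma finite_runner_swap: "finite A \<Longrightarrow> finite (runner_swap m r0 r1 A)"
  unfolding runner_swap_def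
  by (intro finite_from_runners m_pos is_maya_swap_runners is_maya_runner)

lemma runner_runner_swap:
  "r < m \<Longrightarrow> runner m (runner_swap m r0 r1 A) r = swap_runners (runner m A) r0 r1 r"
  unfolding runner_swap_def by (rule runner_from_runners)

lemma swap_runners_cong:
  assumes "\<And>r. r < m \<Longrightarrow> F r = G r" "r < m"
  shows "swap_runners F r0 r1 r = swap_runners G r0 r1 r"
  unfolding swap_runners_def using assms r0 r1 by auto

lemma swap_runners_charge_size:
  assumes "\<And>r. r < m \<Longrightarrow> is_maya (F r)"
  shows "charge (swap_runners F r0 r1 r0) = charge (F r0)"
    and "charge (swap_runners F r0 r1 r1) = charge (F r1)"
    and "maya_size (swap_runners F r0 r1 r0) = maya_size (F r1)"
    and "maya_size (swap_runners F r0 r1 r1) = maya_size (F r0)"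
  unfolding swap_runners_def using distinct charge_size_shift[OF assms[OF r0]]
    charge_size_shift[OF assms[OF r1]] by simp_all

lemma swap_runners_swap_runners:
  assumes "\<And>r. r < m \<Longrightarrow> is_maya (F r)"
  shows "swap_runners (swap_runners F r0 r1) r0 r1 = F"
proof
  fix r
  let ?c0 = "charge (F r0)" and ?c1 = "charge (F r1)"
  have G: "swap_runners F r0 r1 r0 = shift (?c0 - ?c1) (F r1)"
    "swap_runners F r0 r1 r1 = shift (?c1 - ?c0) (F r0)"
    unfolding swap_runners_def using distinct by auto
  show "swap_runners (swap_runners F r0 r1) r0 r1 r = F r"
    using distinct swap_runners_charge_size(1,2)[of F, OF assms]
    unfolding swap_runners_def[of "swap_runners F r0 r1"] G
    by (simp add: shift_shift swap_runners_def)
qed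

lemma runner_swap_runner_swap:
  assumes "finite A"
  shows "runner_swap m r0 r1 (runner_swap m r0 r1 A) = A"
proof -
  have "runner_swap m r0 r1 (runner_swap m r0 r1 A) =
      from_runners m (swap_runners (swap_runners (runner m A) r0 r1) r0 r1)"
    unfolding runner_swap_def[of m r0 r1 "runner_swap m r0 r1 A"]
    by (intro from_runners_cong m_pos swap_runners_cong) (auto simp: runner_runner_swap)
  also have "\<dots> = A"
    using assms by (simp add: swap_runners_swap_runners is_maya_runner m_pos from_runners_runner)
  finally show ?thesis .
qed

lemma corners_runner_swap: "corners (runner m (runner_swap m r0 r1 A) r0) = corners (runner m A r1)"
  using runner_runner_swap[OF r0] unfolding swap_runners_def by (simp add: corners_shift)

lemma diag_weight_runner_swap:
  assumes "finite A"
  shows "diag_weight (runner_swap m r0 r1 A) = diag_weight A"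
proof -
  let ?F = "runner m A" and ?G = "swap_runners (runner m A) r0 r1"
  have mF: "\<And>r. is_maya (?F r)"
    using assms m_pos by (rule is_maya_runner)
  have "int (diag_weight (runner_swap m r0 r1 A)) = (\<Sum>r<m. runner_weight m r (?G r))"
    unfolding diag_weight_runners[OF finite_runner_swap[OF assms] m_pos]
    by (intro sum.cong) (simp_all add: runner_runner_swap)
  also have "\<dots> = (\<Sum>r<m. runner_weight m r (?F r))"
  proof (rule sum_eq_if_agree_off_pair)
    show "runner_weight m r (?G r) = runner_weight m r (?F r)" if "r \<noteq> r0" "r \<noteq> r1" for r
      using that unfolding swap_runners_def by simp
    show "runner_weight m r0 (?G r0) + runner_weight m r1 (?G r1) =
        runner_weight m r0 (?F r0) + runner_weight m r1 (?F r1)"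
      unfolding runner_weight_def maya_moment_eq_size using swap_runners_charge_size[of ?F, OF mF]
      by (simp add: algebra_simps)
  qed (use r0 r1 distinct in auto)
  also have "\<dots> = int (diag_weight A)"
    by (rule diag_weight_runners[OF assms m_pos, symmetric])
  finally show ?thesis
    by simp
qed

end

section \<open>Pairs of the symmetric Maya diagram summing to \<open>2m - 1\<close>\<close>

definition maya_pair_set :: "nat \<Rightarrow> nat set \<Rightarrow> int set" where
  "maya_pair_set m A = {u \<in> maya_diagram A. 2 * int m - 1 - u \<in> maya_diagram A}"

definition maya_pairs :: "nat \<Rightarrow> nat set \<Rightarrow> nat" where
  "maya_pairs m A = card (maya_pair_set m A)"

lemma runner_reflect:
  assumes "r < 2 * m"
  shows "runner m A (2 * m - 1 - r) = {k. -1 - k \<notin> runner m A r}"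
proof -
  have "int (2 * m - 1 - r) + 2 * int m * k = -1 - (int r + 2 * int m * (-1 - k))" for k
    using assms by (simp add: of_nat_diff algebra_simps)
  then show ?thesis
    unfolding runner_def by (simp add: maya_diagram_reflect)
qed

text \<open>By the symmetry of the diagram, \<open>2m - 1 - u\<close> lies in it iff \<open>u - 2m\<close> does not, so
  the pairs are exactly the beads whose predecessor on the same runner is a gap.\<close>
lemma maya_pair_set_residue:
  assumes "q < 2 * m"
  shows "{u \<in> maya_pair_set m A. nat (u mod (2 * int m)) = q} =
    (\<lambda>k. int q + 2 * int m * k) ` corner_set (runner m A q)"
proof -
  have partner: "2 * int m - 1 - u \<in> maya_diagram A \<longleftrightarrow> u - 2 * int m \<notin> maya_diagram A" for u
    using maya_diagram_reflect[where u = "u - 2 * int m" and A = A] by (simp add: algebra_simps)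
  have "u \<in> maya_pair_set m A \<and> nat (u mod (2 * int m)) = q \<longleftrightarrow>
      (\<exists>k. u = int q + 2 * int m * k \<and> k \<in> corner_set (runner m A q))" for u
  proof
    assume u: "u \<in> maya_pair_set m A \<and> nat (u mod (2 * int m)) = q"
    have "2 * int m > 0"
      using assms by simp
    then have "u mod (2 * int m) = int q"
      using u pos_mod_sign[of "2 * int m" u] by auto
    then have ud: "u = int q + 2 * int m * (u div (2 * int m))"
      using mult_div_mod_eq[of "2 * int m" u] by linarith
    then have "u - 2 * int m = int q + 2 * int m * (u div (2 * int m) - 1)"
      by (simp add: algebra_simps)
    then have "u div (2 * int m) \<in> corner_set (runner m A q)"
      using u ud partner unfolding maya_pair_set_def corner_set_def runner_def by auto
    then show "\<exists>k. u = int q + 2 * int m * k \<and> k \<in> corner_set (runner m A q)"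
      using ud by blast
  next
    assume "\<exists>k. u = int q + 2 * int m * k \<and> k \<in> corner_set (runner m A q)"
    then obtain k where u: "u = int q + 2 * int m * k" and k: "k \<in> corner_set (runner m A q)"
      by blast
    have "u mod (2 * int m) = int q"
      unfolding u using assms by simp
    moreover have "u \<in> maya_diagram A"
      using k unfolding u corner_set_def runner_def by simp
    moreover have "u - 2 * int m = int q + 2 * int m * (k - 1)"
      unfolding u by (simp add: algebra_simps)
    then have "u - 2 * int m \<notin> maya_diagram A"
      using k unfolding corner_set_def runner_def by simp
    ultimately show "u \<in> maya_pair_set m A \<and> nat (u mod (2 * int m)) = q"
      unfolding maya_pair_set_def partner by simp
  qed
  then show ?thesis
    by blast
qed

lemma maya_pairs_eq_sum_corners:
  assumes "finite A" "m > 0"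
  shows "maya_pairs m A = (\<Sum>q<2 * m. corners (runner m A q))"
proof -
  let ?H = "maya_pair_set m A" and ?res = "\<lambda>u. nat (u mod (2 * int m))"
  have res_lt: "?res u < 2 * m" for u
    using assms(2) by (simp add: nat_less_iff)
  have inj: "inj_on (\<lambda>k. int q + 2 * int m * k) X" for q X
    using assms(2) by (simp add: inj_on_def)
  have "?H = (\<Union>q<2 * m. {u \<in> ?H. ?res u = q})"
    using res_lt by blast
  moreover have "finite {u \<in> ?H. ?res u = q}" if "q < 2 * m" for q
    unfolding maya_pair_set_residue[OF that]
    using assms by (simp add: finite_corner_set is_maya_runner)
  ultimately have "finite ?H"
    by (metis (no_types, lifting) finite_UN finite_lessThan lessThan_iff)
  then have "maya_pairs m A = (\<Sum>q<2 * m. card {u \<in> ?H. ?res u = q})"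
    unfolding maya_pairs_def using res_lt
    by (subst card_eq_sum, subst sum.group[symmetric]) auto
  also have "\<dots> = (\<Sum>q<2 * m. corners (runner m A q))"
    by (intro sum.cong) (simp_all add: maya_pair_set_residue corners_def card_image inj)
  finally show ?thesis .
qed

lemma maya_pairs_eq_double_sum_corners:
  assumes "finite A" "m > 0"
  shows "maya_pairs m A = 2 * (\<Sum>r<m. corners (runner m A r))"
proof -
  have "corners (runner m A (2 * m - 1 - r)) = corners (runner m A r)" if "r < m" for r
  proof -
    have r: "r < 2 * m"
      using that by simp
    show ?thesis
      unfolding runner_reflect[OF r] corners_reflect_complement ..
  qed
  then show ?thesis
    unfolding maya_pairs_eq_sum_corners[OF assms] sum_lessThan_double_reflect
    by (simp add: sum.distrib)
qed

section \<open>Equidistribution of corners over the runners\<close>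

definition arm_sets :: "nat \<Rightarrow> nat set set" where
  "arm_sets n = {A. finite A \<and> diag_weight A = n}"

lemma sum_corners_runner_eq_runner_0:
  assumes "r < m"
  shows "(\<Sum>A\<in>arm_sets n. corners (runner m A r)) = (\<Sum>A\<in>arm_sets n. corners (runner m A 0))"
proof (cases "r = 0")
  case False
  interpret runner_pair m 0 r
    using assms False by unfold_locales auto
  have bij: "bij_betw (runner_swap m 0 r) (arm_sets n) (arm_sets n)"
    by (rule bij_betw_byWitness[where f' = "runner_swap m 0 r"])
      (use runner_swap_runner_swap finite_runner_swap diag_weight_runner_swap
        in \<open>auto simp: arm_sets_def\<close>)
  have "(\<Sum>A\<in>arm_sets n. corners (runner m A r)) =
      (\<Sum>A\<in>arm_sets n. corners (runner m (runner_swap m 0 r A) 0))"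
    by (simp add: corners_runner_swap)
  also have "\<dots> = (\<Sum>A\<in>arm_sets n. corners (runner m A 0))"
    using sum.reindex_bij_betw[OF bij, of "\<lambda>A. corners (runner m A 0)"] by simp
  finally show ?thesis .
qed simp

lemma dvd_sum_maya_pairs:
  assumes "m > 0"
  shows "2 * m dvd (\<Sum>A\<in>arm_sets n. maya_pairs m A)"
proof -
  have "(\<Sum>A\<in>arm_sets n. maya_pairs m A) = (\<Sum>A\<in>arm_sets n. 2 * (\<Sum>r<m. corners (runner m A r)))"
    using assms by (intro sum.cong) (simp_all add: arm_sets_def maya_pairs_eq_double_sum_corners)
  also have "\<dots> = 2 * (\<Sum>r<m. \<Sum>A\<in>arm_sets n. corners (runner m A r))"
    unfolding sum_distrib_left[symmetric] by (rule arg_cong[where f = "(*) 2"], rule sum.swap)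
  also have "\<dots> = 2 * (\<Sum>r<m. \<Sum>A\<in>arm_sets n. corners (runner m A 0))"
    by (rule arg_cong[where f = "(*) 2"], rule sum.cong[OF refl],
        rule sum_corners_runner_eq_runner_0) simp
  also have "\<dots> = 2 * m * (\<Sum>A\<in>arm_sets n. corners (runner m A 0))"
    by simp
  finally show ?thesis
    by simp
qed

section \<open>Symmetric shapes and their diagonal arms\<close>

text \<open>A Young diagram is encoded by its row lengths \<open>L i\<close>, with cells \<open>(i, j)\<close> for
  \<open>j < L i\<close>.\<close>
definition sym_shape :: "(nat \<Rightarrow> nat) \<Rightarrow> bool" where
  "sym_shape L \<longleftrightarrow> (\<forall>i j. j < L i \<longleftrightarrow> i < L j)"

lemma sym_shapeD: "sym_shape L \<Longrightarrow> j < L i \<longleftrightarrow> i < L j"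
  unfolding sym_shape_def by blast

lemma sym_shape_antimono:
  assumes "sym_shape L" "i \<le> i'"
  shows "L i' \<le> L i"
proof (rule ccontr)
  assume "\<not> L i' \<le> L i"
  then have "i' < L (L i)"
    using sym_shapeD[OF assms(1)] by (simp add: not_le)
  then have "L i < L i"
    using assms sym_shapeD[OF assms(1), of "L i" i] by simp
  then show False
    by simp
qed

lemma sym_shape_pos_iff: "sym_shape L \<Longrightarrow> 0 < L i \<longleftrightarrow> i < L 0"
  using sym_shapeD[of L 0 i] by simp

lemma down_closed_eq_lessThan_card:
  assumes "finite S" "\<And>x y. x \<in> S \<Longrightarrow> y < x \<Longrightarrow> y \<in> S"
  shows "S = {..<card S}"
proof -
  have "S \<subseteq> {..<card S}"
  proof
    fix x
    assume x: "x \<in> S"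
    have "{..x} \<subseteq> S"
      using assms(2)[OF x] x by (auto simp: le_less)
    then have "card {..x} \<le> card S"
      using assms(1) by (rule card_mono[rotated])
    then show "x \<in> {..<card S}"
      by simp
  qed
  then show ?thesis
    using card_subset_eq[of "{..<card S}" S] by simp
qed

lemma sym_shape_diagonal:
  assumes "sym_shape L"
  shows "{i. i < L i} = {..<card {i. i < L i}}"
proof (rule down_closed_eq_lessThan_card)
  have "{i. i < L i} \<subseteq> {..<L 0}"
    using sym_shape_pos_iff[OF assms] by fastforce
  then show "finite {i. i < L i}"
    by (rule finite_subset) simp
  show "y \<in> {i. i < L i}" if "x \<in> {i. i < L i}" "y < x" for x y
    using that sym_shape_antimono[OF assms, of y x] by simp
qed

definition diag_arms :: "(nat \<Rightarrow> nat) \<Rightarrow> nat set" where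
  "diag_arms L = (\<lambda>i. L i - i - 1) ` {i. i < L i}"

lemma finite_diag_arms: "sym_shape L \<Longrightarrow> finite (diag_arms L)"
  unfolding diag_arms_def by (metis finite_imageI finite_lessThan sym_shape_diagonal)

definition nth_largest :: "nat set \<Rightarrow> nat \<Rightarrow> nat" where
  "nth_largest A k = rev (sorted_list_of_set A) ! k"

lemma nth_largest_strict_antimono:
  assumes "finite A" "k < k'" "k' < card A"
  shows "nth_largest A k' < nth_largest A k"
proof -
  have "sorted_wrt (>) (rev (sorted_list_of_set A))"
    using strict_sorted_list_of_set[of A] by (simp add: sorted_wrt_rev)
  then show ?thesis
    using assms unfolding nth_largest_def sorted_wrt_iff_nth_less by auto
qed

lemma nth_largest_image:
  assumes "finite A"
  shows "nth_largest A ` {..<card A} = A"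
proof -
  have "nth_largest A ` {..<card A} = set (rev (sorted_list_of_set A))"
    unfolding nth_largest_def using assms by (auto simp: set_conv_nth)
  then show ?thesis
    using assms by simp
qed

lemma inj_on_nth_largest: "finite A \<Longrightarrow> inj_on (nth_largest A) {..<card A}"
  by (rule eq_card_imp_inj_on) (simp_all add: nth_largest_image)

lemma nth_largest_step:
  assumes "finite A" "k \<le> k'" "k' < card A"
  shows "nth_largest A k' + (k' - k) \<le> nth_largest A k"
  using assms(2,3)
proof (induction k' rule: dec_induct)
  case (step n)
  then show ?case
    using nth_largest_strict_antimono[OF assms(1), of n "Suc n"] by simp
qed simp

text \<open>The Frobenius construction: the \<open>k\<close>-th diagonal hook (counting the largest arm
  first) covers \<open>(k, j)\<close> and \<open>(j, k)\<close> for \<open>k \<le> j \<le> k + a\<^sub>k\<close>, where \<open>a\<^sub>k\<close> is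
  the \<open>k\<close>-th largest arm.\<close>
definition frob_cell :: "nat set \<Rightarrow> nat \<Rightarrow> nat \<Rightarrow> bool" where
  "frob_cell A i j \<longleftrightarrow> min i j < card A \<and> max i j \<le> min i j + nth_largest A (min i j)"

definition shape_of_arms :: "nat set \<Rightarrow> nat \<Rightarrow> nat" where
  "shape_of_arms A i = card {j. frob_cell A i j}"

lemma frob_cell_sym: "frob_cell A i j \<longleftrightarrow> frob_cell A j i"
  unfolding frob_cell_def by (simp add: min.commute max.commute)

lemma frob_cell_left_closed:
  assumes "finite A" "frob_cell A i j" "j' < j"
  shows "frob_cell A i j'"
proof (cases "i \<le> j")
  case True
  show ?thesis
  proof (cases "i \<le> j'")
    case True
    then show ?thesis
      using assms \<open>i \<le> j\<close> unfolding frob_cell_def by auto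
  next
    case False
    have i: "i < card A" "j \<le> i + nth_largest A i"
      using assms True unfolding frob_cell_def by auto
    have "nth_largest A i + (i - j') \<le> nth_largest A j'"
      using nth_largest_step[OF assms(1), of j' i] False i by simp
    then show ?thesis
      using False i unfolding frob_cell_def by auto
  qed
next
  case False
  have j: "j < card A" "i \<le> j + nth_largest A j"
    using assms False unfolding frob_cell_def by auto
  have "nth_largest A j + (j - j') \<le> nth_largest A j'"
    using nth_largest_step[OF assms(1), of j' j] j assms(3) by simp
  then show ?thesis
    using False j assms(3) unfolding frob_cell_def by auto
qed

lemma finite_frob_cell_row: "finite {j. frob_cell A i j}"
proof -
  let ?B = "max i (card A + Max (nth_largest A ` {..<card A}))"
  have "j \<le> ?B" if "frob_cell A i j" for j
  proof -
    have c: "min i j < card A" "j \<le> min i j + nth_largest A (min i j)"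
      using that unfolding frob_cell_def by auto
    have "nth_largest A (min i j) \<le> Max (nth_largest A ` {..<card A})"
      using c(1) by (intro Max_ge) auto
    then show ?thesis
      using c by linarith
  qed
  then have "{j. frob_cell A i j} \<subseteq> {..?B}"
    by auto
  then show ?thesis
    by (rule finite_subset) simp
qed

lemma frob_cell_row: "finite A \<Longrightarrow> {j. frob_cell A i j} = {..<shape_of_arms A i}"
  unfolding shape_of_arms_def
  by (rule down_closed_eq_lessThan_card[OF finite_frob_cell_row])
    (use frob_cell_left_closed in blast)

lemma sym_shape_shape_of_arms:
  assumes "finite A"
  shows "sym_shape (shape_of_arms A)"
  unfolding sym_shape_def
proof (intro allI)
  fix i j
  have "j < shape_of_arms A i \<longleftrightarrow> frob_cell A i j"
    using frob_cell_row[OF assms, of i] by blast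
  also have "\<dots> \<longleftrightarrow> i < shape_of_arms A j"
    using frob_cell_row[OF assms, of j] frob_cell_sym by blast
  finally show "j < shape_of_arms A i \<longleftrightarrow> i < shape_of_arms A j" .
qed

lemma shape_of_arms_diagonal:
  assumes "finite A" "i < card A"
  shows "shape_of_arms A i = i + nth_largest A i + 1"
proof -
  have "{j. frob_cell A i j} = {..i + nth_largest A i}"
  proof (rule set_eqI)
    fix j
    show "j \<in> {j. frob_cell A i j} \<longleftrightarrow> j \<in> {..i + nth_largest A i}"
    proof (cases "i \<le> j")
      case True
      then show ?thesis
        using assms unfolding frob_cell_def by auto
    next
      case False
      then have "nth_largest A i + (i - j) \<le> nth_largest A j"
        using nth_largest_step[OF assms(1), of j i] assms by simp
      then show ?thesis
        using False assms unfolding frob_cell_def by auto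
    qed
  qed
  then show ?thesis
    unfolding shape_of_arms_def by simp
qed

lemma shape_of_arms_off_diagonal:
  assumes "finite A" "card A \<le> i"
  shows "shape_of_arms A i \<le> i"
proof -
  have "{j. frob_cell A i j} \<subseteq> {..<card A}"
    using assms unfolding frob_cell_def by (auto simp: min_def split: if_splits)
  then have "shape_of_arms A i \<le> card {..<card A}"
    unfolding shape_of_arms_def by (rule card_mono[OF finite_lessThan])
  then show ?thesis
    using assms by simp
qed

lemma diag_arms_shape_of_arms:
  assumes "finite A"
  shows "diag_arms (shape_of_arms A) = A"
proof -
  have D: "{i. i < shape_of_arms A i} = {..<card A}"
  proof (rule set_eqI)
    fix i
    show "i \<in> {i. i < shape_of_arms A i} \<longleftrightarrow> i \<in> {..<card A}"
      using shape_of_arms_diagonal[OF assms, of i] shape_of_arms_off_diagonal[OF assms, of i]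
      by (cases "i < card A") auto
  qed
  have "diag_arms (shape_of_arms A) = nth_largest A ` {..<card A}"
    unfolding diag_arms_def D using shape_of_arms_diagonal[OF assms] by (intro image_cong) auto
  then show ?thesis
    using nth_largest_image[OF assms] by simp
qed

definition diag_hook :: "nat set \<Rightarrow> nat \<Rightarrow> (nat \<times> nat) set" where
  "diag_hook A k = {k} \<times> {k..k + nth_largest A k} \<union> {k<..k + nth_largest A k} \<times> {k}"

lemma card_diag_hook: "card (diag_hook A k) = 2 * nth_largest A k + 1"
proof -
  have "card (diag_hook A k) = card ({k} \<times> {k..k + nth_largest A k}) +
      card ({k<..k + nth_largest A k} \<times> {k})"
    unfolding diag_hook_def by (rule card_Un_disjoint) auto
  then show ?thesis
    by (simp add: card_cartesian_product)
qed

lemma frob_cells_eq_Union_diag_hook: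
  assumes "finite A"
  shows "(SIGMA i:{..<shape_of_arms A 0}. {j. frob_cell A i j}) = (\<Union>k<card A. diag_hook A k)"
proof -
  have "i < shape_of_arms A 0" if "frob_cell A i j" for i j
  proof -
    have "j < shape_of_arms A i"
      using frob_cell_row[OF assms, of i] that by blast
    then show ?thesis
      using sym_shape_pos_iff[OF sym_shape_shape_of_arms[OF assms], of i] by simp
  qed
  moreover have "frob_cell A i j \<longleftrightarrow> (i, j) \<in> (\<Union>k<card A. diag_hook A k)" for i j
  proof (cases "i \<le> j")
    case True
    then have "min i j = i" "max i j = j"
      by auto
    then show ?thesis
      unfolding frob_cell_def diag_hook_def using True by auto
  next
    case False
    then have "min i j = j" "max i j = i"
      by auto
    then show ?thesis
      unfolding frob_cell_def diag_hook_def using False by (auto intro!: bexI[where x = j])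
  qed
  ultimately show ?thesis
    by auto
qed

lemma sum_shape_of_arms:
  assumes "finite A"
  shows "(\<Sum>i<shape_of_arms A 0. shape_of_arms A i) = diag_weight A"
proof -
  have disjoint: "diag_hook A k \<inter> diag_hook A k' = {}" if "k \<noteq> k'" for k k'
    using that unfolding diag_hook_def by auto
  have "(\<Sum>i<shape_of_arms A 0. shape_of_arms A i) =
      (\<Sum>i<shape_of_arms A 0. card {j. frob_cell A i j})"
    using frob_cell_row[OF assms] by simp
  also have "\<dots> = card (SIGMA i:{..<shape_of_arms A 0}. {j. frob_cell A i j})"
    by (rule card_SigmaI[symmetric]) (auto simp: finite_frob_cell_row)
  also have "\<dots> = (\<Sum>k<card A. card (diag_hook A k))"
    unfolding frob_cells_eq_Union_diag_hook[OF assms]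
    by (rule card_UN_disjoint) (auto simp: diag_hook_def disjoint)
  also have "\<dots> = (\<Sum>k<card A. 2 * nth_largest A k + 1)"
    by (simp add: card_diag_hook)
  also have "\<dots> = diag_weight A"
    unfolding diag_weight_def
    by (subst (2) nth_largest_image[OF assms, symmetric])
      (simp add: sum.reindex[OF inj_on_nth_largest[OF assms]])
  finally show ?thesis .
qed

lemma nth_largest_strict_antimono_image:
  assumes dec: "\<And>k k'. k < k' \<Longrightarrow> k' < d \<Longrightarrow> f k' < (f k :: nat)"
  shows "card (f ` {..<d}) = d" and "k < d \<Longrightarrow> nth_largest (f ` {..<d}) k = f k"
proof -
  have "inj_on f {..<d}"
    using dec by (intro inj_onI) (metis lessThan_iff less_irrefl linorder_neqE_nat)
  then show card: "card (f ` {..<d}) = d"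
    by (simp add: card_image)
  have "sorted_wrt (<) (rev (map f [0..<d]))"
    by (subst sorted_wrt_rev) (auto simp: sorted_wrt_iff_nth_less intro: dec)
  then have "sorted_list_of_set (f ` {..<d}) = rev (map f [0..<d])"
    using sorted_list_of_set_unique[of "f ` {..<d}" "rev (map f [0..<d])"] card
    by (simp add: atLeast0LessThan)
  then show "nth_largest (f ` {..<d}) k = f k" if "k < d"
    unfolding nth_largest_def using that by simp
qed

lemma card_nth_largest_diag_arms:
  assumes "sym_shape L"
  shows "card (diag_arms L) = card {i. i < L i}"
    and "k < card {i. i < L i} \<Longrightarrow> nth_largest (diag_arms L) k = L k - k - 1"
proof -
  define d where "d = card {i. i < L i}"
  have D: "{i. i < L i} = {..<d}"
    using sym_shape_diagonal[OF assms] d_def by simp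
  let ?x = "\<lambda>i. L i - i - 1"
  have dec: "?x k' < ?x k" if "k < k'" "k' < d" for k k'
  proof -
    have "k' < L k'"
      using that D by blast
    then show ?thesis
      using that sym_shape_antimono[OF assms, of k k'] by simp
  qed
  have arms: "diag_arms L = ?x ` {..<d}"
    unfolding diag_arms_def D ..
  show "card (diag_arms L) = card {i. i < L i}"
    unfolding arms d_def[symmetric] by (rule nth_largest_strict_antimono_image(1)[OF dec])
  show "nth_largest (diag_arms L) k = ?x k" if "k < card {i. i < L i}"
    unfolding arms using nth_largest_strict_antimono_image(2)[OF dec] that d_def by simp
qed

lemma frob_cell_diag_arms_iff:
  assumes "sym_shape L"
  shows "frob_cell (diag_arms L) i j \<longleftrightarrow> j < L i"
proof -
  note D = sym_shape_diagonal[OF assms]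
  have diag: "k < card (diag_arms L) \<and> l \<le> k + nth_largest (diag_arms L) k \<longleftrightarrow> l < L k"
    if "k \<le> l" for k l
  proof (cases "k < L k")
    case True
    then have "k < card {i. i < L i}"
      using D by blast
    then show ?thesis
      using that True card_nth_largest_diag_arms[OF assms] by auto
  next
    case False
    then have "\<not> k < card {i. i < L i}"
      using D by blast
    then show ?thesis
      using that False card_nth_largest_diag_arms(1)[OF assms] by auto
  qed
  show ?thesis
  proof (cases "i \<le> j")
    case True
    then show ?thesis
      unfolding frob_cell_def using diag[OF True] by (simp add: min_def max_def)
  next
    case False
    then show ?thesis
      unfolding frob_cell_def using diag[of j i] sym_shapeD[OF assms, of j i]
      by (simp add: min_def max_def)
  qed
qed

lemma shape_of_arms_diag_arms:
  assumes "sym_shape L"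
  shows "shape_of_arms (diag_arms L) = L"
  unfolding shape_of_arms_def frob_cell_diag_arms_iff[OF assms] by simp

lemma diag_weight_diag_arms:
  assumes "sym_shape L"
  shows "diag_weight (diag_arms L) = (\<Sum>i<L 0. L i)"
  using sum_shape_of_arms[OF finite_diag_arms[OF assms]]
  unfolding shape_of_arms_diag_arms[OF assms] by simp

section \<open>Hook lengths of a symmetric shape\<close>

lemma card_pairs_with_sum:
  fixes f :: "'a \<Rightarrow> 'b::ab_group_add"
  assumes "inj f"
  shows "card {(i, j). f i + f j = c} = card {u \<in> range f. c - u \<in> range f}"
proof -
  let ?P = "{(i, j). f i + f j = c}"
  have "inj_on fst ?P"
  proof (rule inj_onI)
    fix p q
    assume "p \<in> ?P" "q \<in> ?P" "fst p = fst q"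
    then have "f (snd p) = f (snd q)"
      by auto
    then show "p = q"
      using \<open>fst p = fst q\<close> assms by (simp add: inj_eq prod_eq_iff)
  qed
  moreover have "f ` fst ` ?P = {u \<in> range f. c - u \<in> range f}"
  proof (rule set_eqI)
    fix u
    show "u \<in> f ` fst ` ?P \<longleftrightarrow> u \<in> {u \<in> range f. c - u \<in> range f}"
    proof
      assume "u \<in> f ` fst ` ?P"
      then obtain i j where "u = f i" "f i + f j = c"
        by auto
      then have "c - u = f j"
        by (simp add: algebra_simps)
      then show "u \<in> {u \<in> range f. c - u \<in> range f}"
        using \<open>u = f i\<close> by auto
    next
      assume "u \<in> {u \<in> range f. c - u \<in> range f}"
      then obtain i j where "u = f i" "c - u = f j"
        by blast
      then have "f i + f j = c"
        by (metis add.commute diff_add_cancel)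
      then have "(i, j) \<in> ?P"
        by simp
      then show "u \<in> f ` fst ` ?P"
        using \<open>u = f i\<close> by force
    qed
  qed
  ultimately show ?thesis
    using card_image[of fst ?P] card_image[OF inj_on_subset[OF assms subset_UNIV], of "fst ` ?P"]
    by simp
qed

definition shape_hook :: "(nat \<Rightarrow> nat) \<Rightarrow> nat \<Rightarrow> nat \<Rightarrow> nat" where
  "shape_hook L i j = (L i - (j + 1)) + (L j - (i + 1)) + 1"

definition shape_hook_count :: "(nat \<Rightarrow> nat) \<Rightarrow> nat \<Rightarrow> nat" where
  "shape_hook_count L t = card {(i, j). j < L i \<and> shape_hook L i j = t}"

locale sym_shape_coords =
  fixes L :: "nat \<Rightarrow> nat"
  assumes sym: "sym_shape L"
begin

text \<open>The hook of the cell \<open>(i, j)\<close> is \<open>coord i + coord j + 1\<close>, and the values of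
  \<open>coord\<close> form the Maya diagram of the shape.\<close>
definition coord :: "nat \<Rightarrow> int" where
  "coord i = int (L i) - int i - 1"

lemma coord_step: "k \<le> k' \<Longrightarrow> coord k' + (int k' - int k) \<le> coord k"
  using sym_shape_antimono[OF sym, of k k'] unfolding coord_def by simp

lemma inj_coord: "inj coord"
proof (rule injI)
  fix a b
  assume "coord a = coord b"
  then show "a = b"
    using coord_step[of a b] coord_step[of b a] by (cases a b rule: linorder_cases) auto
qed

lemma shape_hook_eq_coord:
  assumes "j < L i"
  shows "int (shape_hook L i j) = coord i + coord j + 1"
proof -
  have "i < L j"
    using sym_shapeD[OF sym] assms by blast
  then show ?thesis
    using assms unfolding shape_hook_def coord_def by (simp add: of_nat_diff)
qed

lemma coord_sum_not_cell:
  assumes "\<not> j < L i"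
  shows "coord i + coord j \<le> -2"
proof -
  have "\<not> i < L j"
    using sym_shapeD[OF sym] assms by blast
  then show ?thesis
    using assms unfolding coord_def by simp
qed

lemma coord_sum_ne: "coord i + coord j \<noteq> -1"
proof (cases "j < L i")
  case True
  then show ?thesis
    using shape_hook_eq_coord[OF True] unfolding shape_hook_def by simp
next
  case False
  then show ?thesis
    using coord_sum_not_cell by fastforce
qed

lemma int_in_range_coord: "int y \<in> range coord \<longleftrightarrow> y \<in> diag_arms L"
proof
  assume "int y \<in> range coord"
  then obtain i where "coord i = int y"
    by auto
  then have "i < L i" "y = L i - i - 1"
    unfolding coord_def by auto
  then show "y \<in> diag_arms L"
    unfolding diag_arms_def by blast
next
  assume "y \<in> diag_arms L"
  then obtain i where "i < L i" "y = L i - i - 1"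
    unfolding diag_arms_def by auto
  then have "coord i = int y"
    unfolding coord_def by (simp add: of_nat_diff)
  then show "int y \<in> range coord"
    by (metis rangeI)
qed

lemma coord_above_eq_lessThan: "{k. int y < coord k} = {..<card {k. int y < coord k}}"
proof (rule down_closed_eq_lessThan_card)
  have "{k. int y < coord k} \<subseteq> {..<L 0}"
  proof
    fix k
    assume "k \<in> {k. int y < coord k}"
    then have "0 < L k"
      unfolding coord_def by simp
    then show "k \<in> {..<L 0}"
      using sym_shape_pos_iff[OF sym, of k] by simp
  qed
  then show "finite {k. int y < coord k}"
    using finite_subset by blast
  show "b \<in> {k. int y < coord k}" if "a \<in> {k. int y < coord k}" "b < a" for a b
    using that coord_step[of b a] by simp
qed

text \<open>If \<open>y \<ge> 0\<close> is not a coordinate, the \<open>p\<close> rows with coordinate above \<open>y\<close> are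
  exactly the rows longer than \<open>y + p\<close>; by symmetry column \<open>y + p\<close> has length \<open>p\<close>,
  so \<open>coord (y + p) = -1 - y\<close>.\<close>
lemma long_rows_eq_coord_above:
  assumes "int y \<notin> range coord"
  defines "p \<equiv> card {k. int y < coord k}"
  shows "{k. y + p < L k} = {..<p}"
proof (rule set_eqI)
  have above: "int y < coord k \<longleftrightarrow> k < p" for k
    using coord_above_eq_lessThan unfolding p_def by blast
  fix k
  show "k \<in> {k. y + p < L k} \<longleftrightarrow> k \<in> {..<p}"
  proof
    assume "k \<in> {..<p}"
    then have kp: "k < p"
      by simp
    then have "coord (p - 1) \<ge> int y + 1"
      using above[of "p - 1"] by simp
    moreover have "coord (p - 1) + (int (p - 1) - int k) \<le> coord k"
      using kp by (intro coord_step) simp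
    ultimately show "k \<in> {k. y + p < L k}"
      using kp unfolding coord_def by (simp add: of_nat_diff)
  next
    assume long: "k \<in> {k. y + p < L k}"
    show "k \<in> {..<p}"
    proof (rule ccontr)
      assume "k \<notin> {..<p}"
      have "coord p \<noteq> int y"
        using assms by (metis rangeI)
      then have "coord p < int y"
        using above[of p] by simp
      then have "L p \<le> y + p"
        unfolding coord_def by simp
      moreover have "L k \<le> L p"
        using sym_shape_antimono[OF sym] \<open>k \<notin> {..<p}\<close> by simp
      ultimately show False
        using long by simp
    qed
  qed
qed

lemma range_coord_complement:
  assumes "int y \<notin> range coord"
  shows "-1 - int y \<in> range coord"
proof -
  define p where "p = card {k. int y < coord k}"
  have "{k. y + p < L k} = {..<L (y + p)}"
    using sym_shapeD[OF sym] by blast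
  then have "L (y + p) = p"
    using long_rows_eq_coord_above[OF assms] unfolding p_def by (metis card_lessThan)
  then have "coord (y + p) = -1 - int y"
    unfolding coord_def by simp
  then show ?thesis
    by (metis rangeI)
qed

lemma range_coord: "range coord = maya_diagram (diag_arms L)"
proof (rule set_eqI)
  fix u
  show "u \<in> range coord \<longleftrightarrow> u \<in> maya_diagram (diag_arms L)"
  proof (cases "u \<ge> 0")
    case True
    then show ?thesis
      using int_in_range_coord[of "nat u"] unfolding maya_diagram_def by simp
  next
    case False
    define y where "y = nat (-1 - u)"
    have u: "u = -1 - int y"
      using False unfolding y_def by simp
    have "u \<in> range coord \<longleftrightarrow> int y \<notin> range coord"
    proof
      assume "u \<in> range coord"
      then obtain i where i: "coord i = u"
        by auto
      show "int y \<notin> range coord"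
      proof
        assume "int y \<in> range coord"
        then obtain j where "coord j = int y"
          by auto
        then show False
          using coord_sum_ne[of i j] i u by simp
      qed
    next
      assume "int y \<notin> range coord"
      then show "u \<in> range coord"
        using range_coord_complement u by simp
    qed
    then show ?thesis
      using int_in_range_coord[of y] False unfolding maya_diagram_def y_def by simp
  qed
qed

lemma hook_cells_eq_coord_pairs:
  assumes "m > 0"
  shows "{(i, j). j < L i \<and> shape_hook L i j = 2 * m} = {(i, j). coord i + coord j = 2 * int m - 1}"
proof -
  have "j < L i \<and> shape_hook L i j = 2 * m \<longleftrightarrow> coord i + coord j = 2 * int m - 1" for i j
  proof
    assume "j < L i \<and> shape_hook L i j = 2 * m"
    then show "coord i + coord j = 2 * int m - 1"
      using shape_hook_eq_coord[of j i] by simp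
  next
    assume s: "coord i + coord j = 2 * int m - 1"
    then have c: "j < L i"
      using coord_sum_not_cell[of j i] assms by fastforce
    then have "int (shape_hook L i j) = int (2 * m)"
      using shape_hook_eq_coord s by simp
    then show "j < L i \<and> shape_hook L i j = 2 * m"
      using c by (simp only: of_nat_eq_iff)
  qed
  then show ?thesis
    by auto
qed

lemma shape_hook_count_eq_maya_pairs:
  assumes "m > 0"
  shows "shape_hook_count L (2 * m) = maya_pairs m (diag_arms L)"
  unfolding shape_hook_count_def hook_cells_eq_coord_pairs[OF assms]
    card_pairs_with_sum[OF inj_coord] range_coord maya_pairs_def maya_pair_set_def ..

end

section \<open>Self-conjugate partitions as symmetric shapes\<close>

definition row_len :: "nat list \<Rightarrow> nat \<Rightarrow> nat" where
  "row_len lam i = (if i < length lam then lam ! i else 0)"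

definition partition_of_shape :: "(nat \<Rightarrow> nat) \<Rightarrow> nat list" where
  "partition_of_shape L = map L [0..<L 0]"

lemma row_len_antimono:
  assumes "is_partition lam" "i \<le> i'"
  shows "row_len lam i' \<le> row_len lam i"
proof (cases "i' < length lam")
  case True
  have "sorted_wrt (\<ge>) lam"
    using assms(1) unfolding is_partition_def by simp
  then have "lam ! i' \<le> lam ! i"
    using True assms(2) unfolding sorted_wrt_iff_nth_less by (cases "i = i'") auto
  then show ?thesis
    using True assms(2) unfolding row_len_def by simp
qed (simp add: row_len_def)

lemma col_len_row_len: "col_len lam j = card {i. j < row_len lam i}"
proof -
  have "{i. i < length lam \<and> j < lam ! i} = {i. j < row_len lam i}"
    unfolding row_len_def by auto
  then show ?thesis
    unfolding col_len_def by simp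
qed

lemma cells_row_len: "cells lam = {(i, j). j < row_len lam i}"
  unfolding cells_def row_len_def by (auto split: if_splits)

lemma length_self_conjugate:
  assumes "self_conjugate lam"
  shows "length lam = row_len lam 0"
proof -
  have "length (conjugate lam) = length lam"
    using assms unfolding self_conjugate_def by simp
  then show ?thesis
    unfolding conjugate_def row_len_def by (cases lam) auto
qed

lemma col_len_self_conjugate:
  assumes "is_partition lam" "self_conjugate lam"
  shows "col_len lam j = row_len lam j"
proof (cases "j < length lam")
  case True
  have "length lam = (if lam = [] then 0 else hd lam)"
    using length_self_conjugate[OF assms(2)] unfolding row_len_def by (cases lam) auto
  moreover have "conjugate lam ! j = lam ! j"
    using assms(2) unfolding self_conjugate_def by simp
  ultimately show ?thesis
    unfolding conjugate_def row_len_def using True by simp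
next
  case False
  have "row_len lam i \<le> j" for i
    using row_len_antimono[OF assms(1), of 0 i] False length_self_conjugate[OF assms(2)] by simp
  then have "{i. j < row_len lam i} = {}"
    by (simp add: not_less)
  then show ?thesis
    using False unfolding col_len_row_len by (simp add: row_len_def)
qed

lemma sym_shape_row_len:
  assumes "is_partition lam" "self_conjugate lam"
  shows "sym_shape (row_len lam)"
proof -
  have "{i. j < row_len lam i} = {..<row_len lam j}" for j
  proof -
    have "finite {i. j < row_len lam i}"
      by (rule finite_subset[of _ "{..<length lam}"]) (auto simp: row_len_def split: if_splits)
    then have "{i. j < row_len lam i} = {..<card {i. j < row_len lam i}}"
      by (rule down_closed_eq_lessThan_card)
        (use row_len_antimono[OF assms(1)] in \<open>fastforce simp: less_le_trans\<close>)
    then show ?thesis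
      using col_len_self_conjugate[OF assms] col_len_row_len by metis
  qed
  then show ?thesis
    unfolding sym_shape_def by blast
qed

lemma partition_of_shape_row_len:
  assumes "self_conjugate lam"
  shows "partition_of_shape (row_len lam) = lam"
proof (rule nth_equalityI)
  show "length (partition_of_shape (row_len lam)) = length lam"
    unfolding partition_of_shape_def using length_self_conjugate[OF assms] by simp
  fix i
  assume "i < length (partition_of_shape (row_len lam))"
  then have "i < row_len lam 0"
    unfolding partition_of_shape_def by simp
  then have "partition_of_shape (row_len lam) ! i = row_len lam i"
    unfolding partition_of_shape_def by simp
  also have "\<dots> = lam ! i"
    using \<open>i < row_len lam 0\<close> length_self_conjugate[OF assms] unfolding row_len_def by simp
  finally show "partition_of_shape (row_len lam) ! i = lam ! i" .
qed

lemma row_len_partition_of_shape: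
  assumes "sym_shape L"
  shows "row_len (partition_of_shape L) = L"
proof
  fix i
  have "\<not> i < L 0 \<Longrightarrow> L i = 0"
    using sym_shape_pos_iff[OF assms, of i] by simp
  then show "row_len (partition_of_shape L) i = L i"
    unfolding row_len_def partition_of_shape_def by simp
qed

lemma is_partition_partition_of_shape:
  assumes "sym_shape L"
  shows "is_partition (partition_of_shape L)"
  unfolding is_partition_def partition_of_shape_def
  using sym_shape_antimono[OF assms] sym_shape_pos_iff[OF assms]
  by (auto simp: sorted_wrt_iff_nth_less)

lemma self_conjugate_partition_of_shape:
  assumes "sym_shape L"
  shows "self_conjugate (partition_of_shape L)"
proof -
  have hd: "(if partition_of_shape L = [] then 0 else hd (partition_of_shape L)) = L 0"
    unfolding partition_of_shape_def by (cases "L 0") (simp_all add: upt_conv_Cons del: upt_Suc)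
  have "col_len (partition_of_shape L) j = L j" for j
  proof -
    have "{i. j < L i} = {..<L j}"
      using sym_shapeD[OF assms] by blast
    then show ?thesis
      unfolding col_len_row_len row_len_partition_of_shape[OF assms] by simp
  qed
  then show ?thesis
    unfolding self_conjugate_def conjugate_def hd by (simp add: partition_of_shape_def)
qed

lemma sum_list_partition_of_shape: "sum_list (partition_of_shape L) = (\<Sum>i<L 0. L i)"
  unfolding partition_of_shape_def
  by (simp add: interv_sum_list_conv_sum_set_nat atLeast0LessThan)

lemma n_hook_eq_shape_hook_count:
  assumes "is_partition lam" "self_conjugate lam"
  shows "n_hook t lam = shape_hook_count (row_len lam) t"
proof -
  have "hook lam (i, j) = shape_hook (row_len lam) i j" if "j < row_len lam i" for i j
  proof -
    have "lam ! i = row_len lam i"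
      using that unfolding row_len_def by (simp split: if_splits)
    then show ?thesis
      unfolding hook_def shape_hook_def using col_len_self_conjugate[OF assms, of j] by simp
  qed
  then have "{c \<in> cells lam. hook lam c = t} =
      {(i, j). j < row_len lam i \<and> shape_hook (row_len lam) i j = t}"
    unfolding cells_row_len by auto
  then show ?thesis
    unfolding n_hook_def shape_hook_count_def by simp
qed

lemma diag_arms_row_len_mem_arm_sets:
  assumes "lam \<in> partitions n" "self_conjugate lam"
  shows "diag_arms (row_len lam) \<in> arm_sets n"
proof -
  have lam: "is_partition lam" "sum_list lam = n"
    using assms(1) unfolding partitions_def by auto
  note sym = sym_shape_row_len[OF lam(1) assms(2)]
  have "diag_weight (diag_arms (row_len lam)) = sum_list (partition_of_shape (row_len lam))"
    unfolding diag_weight_diag_arms[OF sym] sum_list_partition_of_shape ..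
  also have "\<dots> = n"
    using lam partition_of_shape_row_len[OF assms(2)] by simp
  finally show ?thesis
    unfolding arm_sets_def using finite_diag_arms[OF sym] by simp
qed

lemma partition_of_shape_of_arms_mem:
  assumes "A \<in> arm_sets n"
  shows "partition_of_shape (shape_of_arms A) \<in> partitions n"
    and "self_conjugate (partition_of_shape (shape_of_arms A))"
proof -
  have A: "finite A" "diag_weight A = n"
    using assms unfolding arm_sets_def by auto
  note sym = sym_shape_shape_of_arms[OF A(1)]
  have "sum_list (partition_of_shape (shape_of_arms A)) = n"
    unfolding sum_list_partition_of_shape sum_shape_of_arms[OF A(1)] A(2) ..
  then show "partition_of_shape (shape_of_arms A) \<in> partitions n"
    unfolding partitions_def using is_partition_partition_of_shape[OF sym] by simp
  show "self_conjugate (partition_of_shape (shape_of_arms A))"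
    using self_conjugate_partition_of_shape[OF sym] .
qed

lemma bij_betw_self_conjugate_arm_sets:
  "bij_betw (\<lambda>lam. diag_arms (row_len lam)) {lam \<in> partitions n. self_conjugate lam} (arm_sets n)"
proof (rule bij_betw_byWitness[where f' = "\<lambda>A. partition_of_shape (shape_of_arms A)"])
  show "\<forall>lam\<in>{lam \<in> partitions n. self_conjugate lam}.
      partition_of_shape (shape_of_arms (diag_arms (row_len lam))) = lam"
    using sym_shape_row_len unfolding partitions_def
    by (simp add: shape_of_arms_diag_arms partition_of_shape_row_len)
  show "\<forall>A\<in>arm_sets n. diag_arms (row_len (partition_of_shape (shape_of_arms A))) = A"
    unfolding arm_sets_def
    by (simp add: row_len_partition_of_shape sym_shape_shape_of_arms diag_arms_shape_of_arms)
qed (auto simp: diag_arms_row_len_mem_arm_sets partition_of_shape_of_arms_mem)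

lemma a_star_eq_sum_maya_pairs:
  assumes "m > 0"
  shows "a_star (2 * m) n = (\<Sum>A\<in>arm_sets n. maya_pairs m A)"
proof -
  have "n_hook (2 * m) lam = maya_pairs m (diag_arms (row_len lam))"
    if "lam \<in> {lam \<in> partitions n. self_conjugate lam}" for lam
  proof -
    have lam: "is_partition lam" "self_conjugate lam"
      using that unfolding partitions_def by auto
    interpret sym_shape_coords "row_len lam"
      using sym_shape_row_len[OF lam] by unfold_locales
    show ?thesis
      using n_hook_eq_shape_hook_count[OF lam] shape_hook_count_eq_maya_pairs[OF assms] by simp
  qed
  then show ?thesis
    unfolding a_star_def
    using sum.reindex_bij_betw[OF bij_betw_self_conjugate_arm_sets, of "maya_pairs m"] by simp
qed

theorem corollary1p3:
  fixes n m :: nat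
  assumes "m \<ge> 1"
  shows "(2 * m) dvd a_star (2 * m) n"
  using a_star_eq_sum_maya_pairs dvd_sum_maya_pairs assms by simp

end
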